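(* Let $\{\Pi_i\}_{i=1}^n$ be a qubit POVM with $\Pi_i=\alpha_i(\mathbb{I}+\hat n_i\cdot\vec\sigma)$, $\alpha_i\ge0$, $\hat n_i$ unit, $\sum_i\alpha_i=1$, $\sum_i\alpha_i\hat n_i=\vec0$, and let $\mathrm{sym}\{\Pi_i\}$ be the $2n$-outcome POVM $\{\tfrac{\alpha_i}{2}(\mathbb{I}+\hat n_i\cdot\vec\sigma),\tfrac{\alpha_i}{2}(\mathbb{I}-\hat n_i\cdot\vec\sigma)\}_{i=1}^n$. Then $$R(\mathrm{sym}\{\Pi_i\})=\min_{\hat c\in\mathbb{R}^3,\ |\hat c|=1}\ \sum_{i=1}^n\alpha_i|\hat c\cdot\hat n_i|.$$
   Context: A POVM $\{\Pi_i\}$ simulates a family $\{M_{a|x}\}$ if $M_{a|x}=\sum_i p(a|x,i)\Pi_i$ with $p(a|x,i)\ge0$, $\sum_a p(a|x,i)=1$. $\mathcal{P}_r$ is the family of two-outcome POVMs $\{\tfrac12(\mathbb{I}\pm r\hat n\cdot\vec\sigma)\}$ over all unit $\hat n\in\mathbb{R}^3$. $R(\{\Pi_i\})$ is the largest $r$ such that $\{\Pi_i\}$ simulates $\mathcal{P}_r$. *)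

theory Defs
  imports "HOL-Analysis.Analysis"
begin

type_synonym qop = "complex^2^2"

definition sigma_x :: qop where
  "sigma_x = (\<chi> i j. if i \<noteq> j then 1 else 0)"

definition sigma_y :: qop where
  "sigma_y = (\<chi> i j. if i = 1 \<and> j = 2 then - \<i> else if i = 2 \<and> j = 1 then \<i> else 0)"

definition sigma_z :: qop where
  "sigma_z = (\<chi> i j. if i = j then (if i = 1 then 1 else -1) else 0)"

definition dot_sigma :: "real^3 \<Rightarrow> qop" where
  "dot_sigma v = (v$1) *\<^sub>R sigma_x + (v$2) *\<^sub>R sigma_y + (v$3) *\<^sub>R sigma_z"

definition idq :: qop where
  "idq = mat 1"

definition simulates ::
  "'j set \<Rightarrow> ('j \<Rightarrow> qop) \<Rightarrow> 'x set \<Rightarrow> 'a set \<Rightarrow> ('x \<Rightarrow> 'a \<Rightarrow> qop) \<Rightarrow> bool" where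
  "simulates J Q X A M \<longleftrightarrow>
     (\<exists>p :: 'x \<Rightarrow> 'a \<Rightarrow> 'j \<Rightarrow> real.
        (\<forall>x\<in>X. \<forall>a\<in>A. \<forall>j\<in>J. p x a j \<ge> 0) \<and>
        (\<forall>x\<in>X. \<forall>j\<in>J. (\<Sum>a\<in>A. p x a j) = 1) \<and>
        (\<forall>x\<in>X. \<forall>a\<in>A. M x a = (\<Sum>j\<in>J. p x a j *\<^sub>R Q j)))"

definition unit_sphere3 :: "(real^3) set" where
  "unit_sphere3 = {v. norm v = 1}"

definition P_fam :: "real \<Rightarrow> real^3 \<Rightarrow> bool \<Rightarrow> qop" where
  "P_fam r v b = (1/2) *\<^sub>R (idq + (if b then r else - r) *\<^sub>R dot_sigma v)"

definition simulates_P :: "'j set \<Rightarrow> ('j \<Rightarrow> qop) \<Rightarrow> real \<Rightarrow> bool" where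
  "simulates_P J Q r \<longleftrightarrow> simulates J Q unit_sphere3 UNIV (P_fam r)"

definition R_POVM :: "'j set \<Rightarrow> ('j \<Rightarrow> qop) \<Rightarrow> real" where
  "R_POVM J Q = (GREATEST r. simulates_P J Q r)"

definition sym_POVM :: "(nat \<Rightarrow> real) \<Rightarrow> (nat \<Rightarrow> real^3) \<Rightarrow> nat \<times> bool \<Rightarrow> qop" where
  "sym_POVM \<alpha> nv ib = (\<alpha> (fst ib) / 2) *\<^sub>R
      (idq + (if snd ib then 1 else -1) *\<^sub>R dot_sigma (nv (fst ib)))"

end

theory Submission imports Defs begin

(*
  Write h(c) = sum_i alpha_i |c . n_i| and m = min over unit c of h(c).
  A qubit effect a I + b . sigma is determined by its Bloch vector b. If sym{Pi_i}
  simulates P_r, the difference of the two simulated effects for the setting c has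
  Bloch vector r c = sum_i t_i alpha_i n_i with |t_i| <= 1; projecting on c gives r <= h(c).
  Conversely h is the support function of the zonotope Z = {sum_i t_i alpha_i n_i : |t_i| <= 1},
  so Z contains the ball of radius m by the separating hyperplane theorem. Writing m v as
  such a combination, the response p(+-|v,(i,s)) = (1 +- s t_i)/2 simulates P_m.
*)

lemma linear_dot_sigma: "linear dot_sigma"
  unfolding linear_iff dot_sigma_def by (auto simp: algebra_simps)

definition bloch :: "qop \<Rightarrow> real^3" where
  "bloch M = (\<chi> k. if k = 1 then Re (M$1$2 + M$2$1) / 2
                 else if k = 2 then Im (M$2$1 - M$1$2) / 2
                 else Re (M$1$1 - M$2$2) / 2)"

lemma linear_bloch: "linear bloch"
  unfolding linear_iff bloch_def by (auto simp: vec_eq_iff field_simps)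

lemma bloch_idq [simp]: "bloch idq = 0"
  unfolding bloch_def idq_def by (simp add: vec_eq_iff mat_def)

lemma bloch_dot_sigma [simp]: "bloch (dot_sigma u) = u"
  unfolding bloch_def dot_sigma_def sigma_x_def sigma_y_def sigma_z_def
  by (simp add: vec_eq_iff forall_3)

lemma bloch_P_fam: "bloch (P_fam r v b) = ((if b then r else - r) / 2) *\<^sub>R v"
  using linear_bloch unfolding P_fam_def by (simp add: linear_add linear_cmul)

lemma bloch_sym_POVM:
  "bloch (sym_POVM \<alpha> nv j) = ((if snd j then \<alpha> (fst j) else - \<alpha> (fst j)) / 2) *\<^sub>R nv (fst j)"
  using linear_bloch unfolding sym_POVM_def by (simp add: linear_add linear_cmul)

lemma sum_product_bool:
  "finite W \<Longrightarrow> (\<Sum>j\<in>W \<times> (UNIV :: bool set). f j) = (\<Sum>i\<in>W. f (i, True) + f (i, False))"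
proof -
  have "(\<Sum>j\<in>W \<times> (UNIV :: bool set). f j) = (\<Sum>i\<in>W. \<Sum>b\<in>UNIV. f (i, b))"
    by (simp add: sum.cartesian_product)
  then show ?thesis by (simp add: UNIV_bool add.commute)
qed

definition zonotope :: "'i set \<Rightarrow> ('i \<Rightarrow> 'a::real_vector) \<Rightarrow> 'a set" where
  "zonotope W w = {(\<Sum>i\<in>W. t i *\<^sub>R w i) | t. \<forall>i\<in>W. \<bar>t i\<bar> \<le> 1}"

lemma zonotope_empty [simp]: "zonotope {} w = {0}"
  unfolding zonotope_def by auto

lemma zonotope_insert:
  assumes "finite W" "i \<notin> W"
  shows "zonotope (insert i W) w = {x + y | x y. x \<in> (\<lambda>s. s *\<^sub>R w i) ` {-1..1} \<and> y \<in> zonotope W w}"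
proof (intro set_eqI iffI)
  fix z assume "z \<in> zonotope (insert i W) w"
  then obtain t where t: "\<forall>j\<in>insert i W. \<bar>t j\<bar> \<le> 1" "z = (\<Sum>j\<in>insert i W. t j *\<^sub>R w j)"
    unfolding zonotope_def by blast
  have "z = t i *\<^sub>R w i + (\<Sum>j\<in>W. t j *\<^sub>R w j)" using t assms by simp
  moreover have "t i \<in> {-1..1}" using t by (auto simp: abs_le_iff)
  moreover have "(\<Sum>j\<in>W. t j *\<^sub>R w j) \<in> zonotope W w" using t unfolding zonotope_def by auto
  ultimately show "z \<in> {x + y | x y. x \<in> (\<lambda>s. s *\<^sub>R w i) ` {-1..1} \<and> y \<in> zonotope W w}"
    by blast
next
  fix z assume "z \<in> {x + y | x y. x \<in> (\<lambda>s. s *\<^sub>R w i) ` {-1..1} \<and> y \<in> zonotope W w}"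
  then obtain s t where st: "s \<in> {-1..1}" "\<forall>j\<in>W. \<bar>t j\<bar> \<le> 1"
      "z = s *\<^sub>R w i + (\<Sum>j\<in>W. t j *\<^sub>R w j)"
    unfolding zonotope_def by blast
  have "(\<Sum>j\<in>W. t j *\<^sub>R w j) = (\<Sum>j\<in>W. (t(i := s)) j *\<^sub>R w j)"
    using assms by (intro sum.cong) auto
  then have "z = (\<Sum>j\<in>insert i W. (t(i := s)) j *\<^sub>R w j)" using st assms by simp
  moreover have "\<forall>j\<in>insert i W. \<bar>(t(i := s)) j\<bar> \<le> 1" using st by auto
  ultimately show "z \<in> zonotope (insert i W) w" unfolding zonotope_def by blast
qed

lemma compact_zonotope:
  fixes w :: "'i \<Rightarrow> 'a::real_normed_vector"
  shows "finite W \<Longrightarrow> compact (zonotope W w)"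
proof (induction W rule: finite_induct)
  case (insert i W)
  have "compact ((\<lambda>s. s *\<^sub>R w i) ` {-1..1::real})"
    by (intro compact_continuous_image continuous_intros) auto
  then show ?case using insert zonotope_insert[of W i w] by (simp add: compact_sums)
qed simp

lemma convex_zonotope: "convex (zonotope W w)"
  unfolding convex_def
proof (intro ballI allI impI)
  fix x y and u v :: real
  assume "x \<in> zonotope W w" "y \<in> zonotope W w" and uv: "0 \<le> u" "0 \<le> v" "u + v = 1"
  then obtain t1 t2 where t1: "\<forall>i\<in>W. \<bar>t1 i\<bar> \<le> 1" "x = (\<Sum>i\<in>W. t1 i *\<^sub>R w i)"
    and t2: "\<forall>i\<in>W. \<bar>t2 i\<bar> \<le> 1" "y = (\<Sum>i\<in>W. t2 i *\<^sub>R w i)"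
    unfolding zonotope_def by blast
  have "u *\<^sub>R x + v *\<^sub>R y = (\<Sum>i\<in>W. (u * t1 i + v * t2 i) *\<^sub>R w i)"
    using t1 t2 by (simp add: scaleR_sum_right sum.distrib scaleR_add_left)
  moreover have "\<bar>u * t1 i + v * t2 i\<bar> \<le> 1" if "i \<in> W" for i
  proof -
    have "\<bar>u * t1 i + v * t2 i\<bar> \<le> u * \<bar>t1 i\<bar> + v * \<bar>t2 i\<bar>"
      using uv by (simp add: abs_triangle_ineq[THEN order_trans] abs_mult)
    also have "\<dots> \<le> u * 1 + v * 1"
      using uv t1 t2 that by (intro add_mono mult_left_mono) auto
    finally show ?thesis using uv by simp
  qed
  ultimately show "u *\<^sub>R x + v *\<^sub>R y \<in> zonotope W w"
    unfolding zonotope_def mem_Collect_eq by (intro exI[of _ "\<lambda>i. u * t1 i + v * t2 i"]) auto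
qed

lemma zonotope_vertex_inner:
  fixes w :: "'i \<Rightarrow> 'a::real_inner"
  shows "(\<Sum>i\<in>W. (- sgn (a \<bullet> w i)) *\<^sub>R w i) \<in> zonotope W w"
    and "a \<bullet> (\<Sum>i\<in>W. (- sgn (a \<bullet> w i)) *\<^sub>R w i) = - (\<Sum>i\<in>W. \<bar>a \<bullet> w i\<bar>)"
proof -
  show "(\<Sum>i\<in>W. (- sgn (a \<bullet> w i)) *\<^sub>R w i) \<in> zonotope W w"
    unfolding zonotope_def mem_Collect_eq
    by (intro exI[of _ "\<lambda>i. - sgn (a \<bullet> w i)"]) (auto simp: abs_sgn_eq)
  show "a \<bullet> (\<Sum>i\<in>W. (- sgn (a \<bullet> w i)) *\<^sub>R w i) = - (\<Sum>i\<in>W. \<bar>a \<bullet> w i\<bar>)"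
    by (simp add: inner_sum_right sum_negf[symmetric] abs_sgn mult.commute)
qed

lemma cball_subset_zonotope:
  fixes w :: "'i \<Rightarrow> 'a::euclidean_space"
  assumes "finite W" and support: "\<And>a. m * norm a \<le> (\<Sum>i\<in>W. \<bar>a \<bullet> w i\<bar>)"
  shows "cball 0 m \<subseteq> zonotope W w"
proof
  fix x :: 'a assume x: "x \<in> cball 0 m"
  show "x \<in> zonotope W w"
  proof (rule ccontr)
    assume "x \<notin> zonotope W w"
    moreover have "closed (zonotope W w)"
      using compact_zonotope[OF \<open>finite W\<close>] by (rule compact_imp_closed)
    ultimately obtain a b where ab: "a \<bullet> x < b" "\<forall>z\<in>zonotope W w. b < a \<bullet> z"
      using separating_hyperplane_closed_point[OF convex_zonotope] by blast
    have "norm a * norm x \<le> norm a * m"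
      using x by (intro mult_left_mono) auto
    also have "\<dots> \<le> (\<Sum>i\<in>W. \<bar>a \<bullet> w i\<bar>)"
      using support[of a] by (simp only: mult.commute)
    finally have "- (\<Sum>i\<in>W. \<bar>a \<bullet> w i\<bar>) \<le> a \<bullet> x"
      using Cauchy_Schwarz_ineq2[of a x] by linarith
    moreover have "b < - (\<Sum>i\<in>W. \<bar>a \<bullet> w i\<bar>)"
      using ab(2) zonotope_vertex_inner[where a = a and W = W and w = w] by metis
    ultimately show False
      using ab(1) by linarith
  qed
qed

lemma sum_abs_inner_ge_norm:
  fixes w :: "'i \<Rightarrow> 'a::real_inner"
  assumes "\<forall>c. norm c = 1 \<longrightarrow> m \<le> (\<Sum>i\<in>W. \<bar>c \<bullet> w i\<bar>)"
  shows "m * norm a \<le> (\<Sum>i\<in>W. \<bar>a \<bullet> w i\<bar>)"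
proof (cases "a = 0")
  case False
  have "m \<le> (\<Sum>i\<in>W. \<bar>(a /\<^sub>R norm a) \<bullet> w i\<bar>)"
    using assms False by (metis norm_sgn sgn_div_norm)
  also have "\<dots> = (\<Sum>i\<in>W. \<bar>a \<bullet> w i\<bar>) / norm a"
    by (simp add: abs_mult sum_distrib_left divide_inverse_commute)
  finally show ?thesis
    using False by (simp add: pos_le_divide_eq)
qed simp

lemma sum_abs_inner_attains_min_on_sphere:
  fixes w :: "'i \<Rightarrow> 'a::euclidean_space"
  obtains c0 where "norm c0 = 1"
    and "\<forall>c. norm c = 1 \<longrightarrow> (\<Sum>i\<in>W. \<bar>c0 \<bullet> w i\<bar>) \<le> (\<Sum>i\<in>W. \<bar>c \<bullet> w i\<bar>)"
proof -
  have "continuous_on (sphere 0 1) (\<lambda>c::'a. \<Sum>i\<in>W. \<bar>c \<bullet> w i\<bar>)"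
    by (intro continuous_intros)
  moreover have "sphere (0::'a) 1 \<noteq> {}"
    by simp
  ultimately obtain c0 where "c0 \<in> sphere 0 1"
    and "\<forall>c\<in>sphere 0 1. (\<Sum>i\<in>W. \<bar>c0 \<bullet> w i\<bar>) \<le> (\<Sum>i\<in>W. \<bar>c \<bullet> w i\<bar>)"
    using continuous_attains_inf[OF compact_sphere] by blast
  with that show thesis
    by simp
qed

lemma simulates_P_sym_POVM_le:
  assumes "finite S" and "\<forall>i\<in>S. \<alpha> i \<ge> 0"
    and "simulates_P (S \<times> UNIV) (sym_POVM \<alpha> nv) r" and "norm c = 1"
  shows "r \<le> (\<Sum>i\<in>S. \<alpha> i * \<bar>c \<bullet> nv i\<bar>)"
proof -
  obtain p where p0: "\<forall>x\<in>unit_sphere3. \<forall>a\<in>UNIV. \<forall>j\<in>S \<times> UNIV. p x a j \<ge> 0"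
    and p1: "\<forall>x\<in>unit_sphere3. \<forall>j\<in>S \<times> UNIV. (\<Sum>a\<in>UNIV. p x a j) = 1"
    and p2: "\<forall>x\<in>unit_sphere3. \<forall>a\<in>UNIV. P_fam r x a = (\<Sum>j\<in>S \<times> UNIV. p x a j *\<^sub>R sym_POVM \<alpha> nv j)"
    using assms(3) unfolding simulates_P_def simulates_def by blast
  have c: "c \<in> unit_sphere3"
    using assms(4) by (simp add: unit_sphere3_def)
  define g where "g j = bloch (sym_POVM \<alpha> nv j)" for j
  define t where "t j = p c True j - p c False j" for j
  have t: "\<bar>t j\<bar> \<le> 1" if "j \<in> S \<times> UNIV" for j
  proof -
    have "p c True j \<ge> 0" "p c False j \<ge> 0" "p c True j + p c False j = 1"
      using p0 p1 c that by (auto simp: UNIV_bool add.commute)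
    then show ?thesis unfolding t_def by linarith
  qed
  have bloch_P: "bloch (P_fam r c b) = (\<Sum>j\<in>S \<times> UNIV. p c b j *\<^sub>R g j)" for b
    using p2 c linear_bloch by (simp add: linear_sum linear_cmul g_def)
  have "r *\<^sub>R c = bloch (P_fam r c True) - bloch (P_fam r c False)"
    by (simp add: bloch_P_fam scaleR_left_distrib[symmetric])
  also have "\<dots> = (\<Sum>j\<in>S \<times> UNIV. t j *\<^sub>R g j)"
    unfolding bloch_P t_def by (simp add: sum_subtractf[symmetric] scaleR_diff_left)
  finally have rc: "r *\<^sub>R c = (\<Sum>j\<in>S \<times> UNIV. t j *\<^sub>R g j)" .
  have "r = (r *\<^sub>R c) \<bullet> c"
    using assms(4) by (simp add: dot_square_norm)
  also have "\<dots> = (\<Sum>j\<in>S \<times> UNIV. t j * (g j \<bullet> c))"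
    unfolding rc by (simp add: inner_sum_left)
  also have "\<dots> \<le> (\<Sum>j\<in>S \<times> (UNIV :: bool set). \<alpha> (fst j) / 2 * \<bar>c \<bullet> nv (fst j)\<bar>)"
  proof (rule sum_mono)
    fix j assume j: "j \<in> S \<times> (UNIV :: bool set)"
    have "t j * (g j \<bullet> c) \<le> \<bar>t j\<bar> * \<bar>g j \<bullet> c\<bar>"
      by (metis abs_ge_self abs_mult)
    also have "\<dots> \<le> \<bar>g j \<bullet> c\<bar>"
      using t[OF j] by (intro mult_left_le_one_le) auto
    also have "\<bar>g j \<bullet> c\<bar> = \<alpha> (fst j) / 2 * \<bar>c \<bullet> nv (fst j)\<bar>"
      using assms(2) j by (auto simp: g_def bloch_sym_POVM abs_mult inner_commute)
    finally show "t j * (g j \<bullet> c) \<le> \<alpha> (fst j) / 2 * \<bar>c \<bullet> nv (fst j)\<bar>" .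
  qed
  also have "\<dots> = (\<Sum>i\<in>S. \<alpha> i * \<bar>c \<bullet> nv i\<bar>)"
    using assms(1) by (simp add: sum_product_bool)
  finally show ?thesis .
qed

lemma sym_POVM_pair_combination:
  "((1 + x) / 2) *\<^sub>R sym_POVM \<alpha> nv (i, True) + ((1 - x) / 2) *\<^sub>R sym_POVM \<alpha> nv (i, False)
     = (\<alpha> i / 2) *\<^sub>R idq + (x * \<alpha> i / 2) *\<^sub>R dot_sigma (nv i)"
proof -
  have "((1 + x) / 2) *\<^sub>R sym_POVM \<alpha> nv (i, True) + ((1 - x) / 2) *\<^sub>R sym_POVM \<alpha> nv (i, False)
      = (((1 + x) / 2) * (\<alpha> i / 2) + ((1 - x) / 2) * (\<alpha> i / 2)) *\<^sub>R idq
        + (((1 + x) / 2) * (\<alpha> i / 2) - ((1 - x) / 2) * (\<alpha> i / 2)) *\<^sub>R dot_sigma (nv i)"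
    unfolding sym_POVM_def
    by (simp add: scaleR_add_right scaleR_add_left scaleR_diff_left scaleR_diff_right)
  also have "((1 + x) / 2) * (\<alpha> i / 2) + ((1 - x) / 2) * (\<alpha> i / 2) = \<alpha> i / 2"
    by (simp add: field_simps)
  also have "((1 + x) / 2) * (\<alpha> i / 2) - ((1 - x) / 2) * (\<alpha> i / 2) = x * \<alpha> i / 2"
    by (simp add: field_simps)
  finally show ?thesis .
qed

lemma sym_POVM_signed_response:
  assumes "finite S" and "(\<Sum>i\<in>S. \<alpha> i) = 1"
    and "r *\<^sub>R v = (\<Sum>i\<in>S. T i *\<^sub>R \<alpha> i *\<^sub>R nv i)"
  shows "(\<Sum>j\<in>S \<times> UNIV. ((1 + (if snd j = b then T (fst j) else - T (fst j))) / 2) *\<^sub>R sym_POVM \<alpha> nv j)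
    = P_fam r v b"
proof -
  define \<sigma> :: real where "\<sigma> = (if b then 1 else - 1)"
  have pair: "((1 + (if True = b then T i else - T i)) / 2) *\<^sub>R sym_POVM \<alpha> nv (i, True)
      + ((1 + (if False = b then T i else - T i)) / 2) *\<^sub>R sym_POVM \<alpha> nv (i, False)
      = (\<alpha> i / 2) *\<^sub>R idq + (\<sigma> * T i * \<alpha> i / 2) *\<^sub>R dot_sigma (nv i)" for i
    using sym_POVM_pair_combination[of "\<sigma> * T i"] by (cases b) (simp_all add: \<sigma>_def)
  have "(\<Sum>i\<in>S. (\<sigma> * T i * \<alpha> i / 2) *\<^sub>R dot_sigma (nv i))
      = dot_sigma (\<Sum>i\<in>S. (\<sigma> * T i * \<alpha> i / 2) *\<^sub>R nv i)"
    using linear_dot_sigma by (simp add: linear_sum linear_cmul)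
  also have "(\<Sum>i\<in>S. (\<sigma> * T i * \<alpha> i / 2) *\<^sub>R nv i) = (\<sigma> / 2) *\<^sub>R (r *\<^sub>R v)"
    unfolding assms(3) scaleR_sum_right by (rule sum.cong) (simp_all add: algebra_simps)
  finally have "(\<Sum>j\<in>S \<times> UNIV. ((1 + (if snd j = b then T (fst j) else - T (fst j))) / 2) *\<^sub>R sym_POVM \<alpha> nv j)
      = (\<Sum>i\<in>S. \<alpha> i / 2) *\<^sub>R idq + dot_sigma ((\<sigma> / 2) *\<^sub>R (r *\<^sub>R v))"
    by (simp only: sum_product_bool[OF assms(1)] fst_conv snd_conv pair sum.distrib scaleR_sum_left)
  also have "\<dots> = P_fam r v b"
    using linear_dot_sigma assms(2)
    by (simp add: P_fam_def \<sigma>_def sum_divide_distrib[symmetric] linear_cmul scaleR_add_right)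
  finally show ?thesis .
qed

lemma simulates_P_sym_POVM_if_in_zonotope:
  assumes "finite S" and "(\<Sum>i\<in>S. \<alpha> i) = 1"
    and "\<And>v. norm v = 1 \<Longrightarrow> r *\<^sub>R v \<in> zonotope S (\<lambda>i. \<alpha> i *\<^sub>R nv i)"
  shows "simulates_P (S \<times> UNIV) (sym_POVM \<alpha> nv) r"
proof -
  have "\<forall>v\<in>unit_sphere3. \<exists>t. (\<forall>i\<in>S. \<bar>t i\<bar> \<le> 1) \<and> r *\<^sub>R v = (\<Sum>i\<in>S. t i *\<^sub>R \<alpha> i *\<^sub>R nv i)"
    using assms(3) unfolding unit_sphere3_def zonotope_def by blast
  from bchoice[OF this] obtain T where T: "\<forall>v\<in>unit_sphere3.
      (\<forall>i\<in>S. \<bar>T v i\<bar> \<le> 1) \<and> r *\<^sub>R v = (\<Sum>i\<in>S. T v i *\<^sub>R \<alpha> i *\<^sub>R nv i)"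
    by blast
  define p where "p v b j = (1 + (if snd j = b then T v (fst j) else - T v (fst j))) / 2"
    for v b and j :: "nat \<times> bool"
  show ?thesis
    unfolding simulates_P_def simulates_def
  proof (intro exI[of _ p] conjI ballI)
    fix v b j assume "v \<in> unit_sphere3" "j \<in> S \<times> (UNIV :: bool set)"
    then have "\<bar>T v (fst j)\<bar> \<le> 1"
      using T by auto
    then show "0 \<le> p v b j"
      by (auto simp: p_def abs_le_iff)
  next
    fix v j
    show "(\<Sum>b\<in>UNIV. p v b j) = 1"
      by (simp add: p_def UNIV_bool field_simps)
  next
    fix v b assume "v \<in> unit_sphere3"
    then have "r *\<^sub>R v = (\<Sum>i\<in>S. T v i *\<^sub>R \<alpha> i *\<^sub>R nv i)"
      using T by blast
    then show "P_fam r v b = (\<Sum>j\<in>S \<times> UNIV. p v b j *\<^sub>R sym_POVM \<alpha> nv j)"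
      unfolding p_def using assms(1,2) by (simp only: sym_POVM_signed_response)
  qed
qed

theorem mainTheorem15:
  fixes n :: nat and \<alpha> :: "nat \<Rightarrow> real" and nv :: "nat \<Rightarrow> real^3"
  assumes "\<forall>i\<in>{1..n}. \<alpha> i \<ge> 0"
    and "\<forall>i\<in>{1..n}. norm (nv i) = 1"
    and "(\<Sum>i\<in>{1..n}. \<alpha> i) = 1"
    and "(\<Sum>i\<in>{1..n}. \<alpha> i *\<^sub>R nv i) = 0"
  shows "\<exists>m. m \<in> {(\<Sum>i\<in>{1..n}. \<alpha> i * \<bar>c \<bullet> nv i\<bar>) | c :: real^3. norm c = 1}
           \<and> (\<forall>c :: real^3. norm c = 1 \<longrightarrow> m \<le> (\<Sum>i\<in>{1..n}. \<alpha> i * \<bar>c \<bullet> nv i\<bar>))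
           \<and> simulates_P ({1..n} \<times> UNIV) (sym_POVM \<alpha> nv) m
           \<and> (\<forall>r. simulates_P ({1..n} \<times> UNIV) (sym_POVM \<alpha> nv) r \<longrightarrow> r \<le> m)
           \<and> R_POVM ({1..n} \<times> UNIV) (sym_POVM \<alpha> nv) = m"
proof -
  define w where "w = (\<lambda>i. \<alpha> i *\<^sub>R nv i)"
  have h_eq: "(\<Sum>i\<in>{1..n}. \<alpha> i * \<bar>c \<bullet> nv i\<bar>) = (\<Sum>i\<in>{1..n}. \<bar>c \<bullet> w i\<bar>)" for c
    using assms(1) by (intro sum.cong) (auto simp: w_def abs_mult)
  obtain c0 :: "real^3" where c0: "norm c0 = 1"
    and c0_min: "\<forall>c. norm c = 1 \<longrightarrow> (\<Sum>i\<in>{1..n}. \<bar>c0 \<bullet> w i\<bar>) \<le> (\<Sum>i\<in>{1..n}. \<bar>c \<bullet> w i\<bar>)"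
    by (rule sum_abs_inner_attains_min_on_sphere)
  define m where "m = (\<Sum>i\<in>{1..n}. \<alpha> i * \<bar>c0 \<bullet> nv i\<bar>)"
  have min: "\<forall>c :: real^3. norm c = 1 \<longrightarrow> m \<le> (\<Sum>i\<in>{1..n}. \<alpha> i * \<bar>c \<bullet> nv i\<bar>)"
    using c0_min unfolding m_def h_eq .
  have "cball 0 m \<subseteq> zonotope {1..n} w"
    using min unfolding h_eq by (intro cball_subset_zonotope sum_abs_inner_ge_norm) simp_all
  moreover have "m \<ge> 0"
    unfolding m_def using assms(1) by (intro sum_nonneg) auto
  ultimately have sim: "simulates_P ({1..n} \<times> UNIV) (sym_POVM \<alpha> nv) m"
    using assms(3) unfolding w_def
    by (intro simulates_P_sym_POVM_if_in_zonotope) (auto simp: subset_iff)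
  have up: "\<forall>r. simulates_P ({1..n} \<times> UNIV) (sym_POVM \<alpha> nv) r \<longrightarrow> r \<le> m"
    using simulates_P_sym_POVM_le[OF _ assms(1) _ c0] by (simp add: m_def)
  have "R_POVM ({1..n} \<times> UNIV) (sym_POVM \<alpha> nv) = m"
    unfolding R_POVM_def using sim up by (intro Greatest_equality) auto
  then show ?thesis
    using c0 m_def min sim up by blast
qed

end
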